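(* In the setting below (piecewise constant successive sleep modes (As3), finite $P_{\mathrm{max}}$), fix a target rate $R$ with $0<R\le R_{\mathrm{max}}$ and let $P^\star_{\mathrm{cons}}(N)$ be the minimum value of Problem (P) for frame length $N$ (other parameters fixed). For each feasible sleep mode $s\in\mathcal S_R$ define $$N_{\mathrm{a},s}=\mathrm{round}\!\left(\min\!\left(NR/\tilde R_s,\,N^+_{\mathrm{a},s}\right)\right),\qquad p_{n,s}=\begin{cases}(2^{RN/N_{\mathrm{a},s}}-1)\sigma^2,& n=0,\dots,N_{\mathrm{a},s}-1,\\ 0,&\text{otherwise,}\end{cases}$$ $$P_{\mathrm{cons},s}(N)=\frac{N_{\mathrm{a},s}}{N}\left(P_0+\gamma\sigma^{2\alpha}\left(2^{RN/N_{\mathrm{a},s}}-1\right)^{\alpha}\right)+\frac{E_{\mathrm{sleep}}((N-N_{\mathrm{a},s})T)}{NT}.$$ Then, as $N\to\infty$, $P^\star_{\mathrm{cons}}(N)=\min_{s\in\mathcal S_R}P_{\mathrm{cons},s}(N)+O(1/N)$; i.e. choosing the feasible mode $s$ with minimal $P_{\mathrm{cons},s}$ and the corresponding allocation is asymptotically optimal.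
   Context: Setting: fix $T>0$, $\sigma^2>0$, $P_{\mathrm{max}}\in(0,\infty)$, $\alpha\in(0,1]$, $\gamma>0$, $P_0\ge0$. (As3): there are sleep modes $s=0,1,\dots,S$ with start times $0=T_0\le T_1<\dots<T_S$, $T_{S+1}=+\infty$, and powers $P_0\ge P_1\ge\dots\ge P_S\ge0$; the sleep power is $P_{\mathrm{sleep}}(t)=P_s$ for $T_s<t\le T_{s+1}$, and $E_{\mathrm{sleep}}(t)=\int_0^tP_{\mathrm{sleep}}(t')dt'=\sum_{s'=0}^{s-1}P_{s'}(T_{s'+1}-T_{s'})+(t-T_s)P_s$ for $T_s<t\le T_{s+1}$ (and $E_{\mathrm{sleep}}(0)=0$). For an integer $N\ge1$, an allocation is $N_{\mathrm{a}}\in\{0,\dots,N\}$ with powers $p_0,\dots,p_{N_{\mathrm{a}}-1}\in[0,P_{\mathrm{max}}]$ ($p_n=0$ for $n\ge N_{\mathrm{a}}$); its consumed power is $P_{\mathrm{cons}}=\frac{N_{\mathrm{a}}}{N}P_0+\frac{\gamma}{N}\sum_{n=0}^{N_{\mathrm{a}}-1}p_n^{\alpha}+\frac{E_{\mathrm{sleep}}((N-N_{\mathrm{a}})T)}{NT}$. Problem (P): minimize $P_{\mathrm{cons}}$ subject to $\frac1N\sum_{n=0}^{N_{\mathrm{a}}-1}\log_2(1+p_n/\sigma^2)=R$. Definitions: $R_{\mathrm{max}}=\log_2(1+P_{\mathrm{max}}/\sigma^2)$; $N^+_{\mathrm{a},s}=N-\lfloor T_s/T\rfloor$ (largest number of active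 slots compatible with entering mode $s$); $\mathcal S_R=\{s\in\{0,\dots,S\}: NR/R_{\mathrm{max}}\le N^+_{\mathrm{a},s}\}$ (feasible sleep modes); $R_{\mathrm{a}}(s)$ is a minimizer over $x>0$ of $\frac{P_0-P_s+\gamma\sigma^{2\alpha}(2^x-1)^{\alpha}}{x}$ (with $R_{\mathrm{a}}(s)=0$ if $P_0=P_s,\alpha=1$); $\tilde R_s=\min(R_{\mathrm{a}}(s),R_{\mathrm{max}})$. $\mathrm{round}(\cdot)$ is rounding to the nearest integer. *)

theory Defs
  imports "HOL-Analysis.Analysis"
begin

text \<open>Sleep modes (As3): start times Tm 0 = 0, Tm 1, ..., Tm S (with Tm (S+1) = +infinity
  implicit) and powers Pw 0 \<ge> Pw 1 \<ge> ... \<ge> Pw S \<ge> 0.  Pw 0 is also the active power P_0.\<close>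

definition sleep_mode :: "(nat \<Rightarrow> real) \<Rightarrow> nat \<Rightarrow> real \<Rightarrow> nat" where
  "sleep_mode Tm S t = (GREATEST s. s \<le> S \<and> Tm s < t)"

definition E_sleep :: "(nat \<Rightarrow> real) \<Rightarrow> (nat \<Rightarrow> real) \<Rightarrow> nat \<Rightarrow> real \<Rightarrow> real" where
  "E_sleep Tm Pw S t =
     (if t \<le> 0 then 0
      else (let s = sleep_mode Tm S t in
              (\<Sum>s'<s. Pw s' * (Tm (Suc s') - Tm s')) + (t - Tm s) * Pw s))"

definition P_cons ::
  "real \<Rightarrow> real \<Rightarrow> real \<Rightarrow> (nat \<Rightarrow> real) \<Rightarrow> (nat \<Rightarrow> real) \<Rightarrow> nat \<Rightarrow> nat \<Rightarrow> nat \<Rightarrow> (nat \<Rightarrow> real) \<Rightarrow> real" where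
  "P_cons T alpha gamma Tm Pw S N Na p =
     real Na / real N * Pw 0 + gamma / real N * (\<Sum>n<Na. p n powr alpha)
     + E_sleep Tm Pw S ((real N - real Na) * T) / (real N * T)"

definition feasible_alloc ::
  "real \<Rightarrow> real \<Rightarrow> real \<Rightarrow> nat \<Rightarrow> nat \<Rightarrow> (nat \<Rightarrow> real) \<Rightarrow> bool" where
  "feasible_alloc sigma2 Pmax R N Na p \<longleftrightarrow>
     Na \<le> N \<and> (\<forall>n<Na. 0 \<le> p n \<and> p n \<le> Pmax) \<and> (\<forall>n\<ge>Na. p n = 0) \<and>
     (1 / real N) * (\<Sum>n<Na. log 2 (1 + p n / sigma2)) = R"

definition P_star ::
  "real \<Rightarrow> real \<Rightarrow> real \<Rightarrow> real \<Rightarrow> real \<Rightarrow> (nat \<Rightarrow> real) \<Rightarrow> (nat \<Rightarrow> real) \<Rightarrow> nat \<Rightarrow> real \<Rightarrow> nat \<Rightarrow> real" where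
  "P_star T sigma2 Pmax alpha gamma Tm Pw S R N =
     Inf {P_cons T alpha gamma Tm Pw S N Na p | Na p. feasible_alloc sigma2 Pmax R N Na p}"

definition R_max :: "real \<Rightarrow> real \<Rightarrow> real" where
  "R_max sigma2 Pmax = log 2 (1 + Pmax / sigma2)"

definition N_plus :: "real \<Rightarrow> (nat \<Rightarrow> real) \<Rightarrow> nat \<Rightarrow> nat \<Rightarrow> real" where
  "N_plus T Tm N s = real N - real_of_int \<lfloor>Tm s / T\<rfloor>"

definition feasible_modes ::
  "real \<Rightarrow> real \<Rightarrow> real \<Rightarrow> (nat \<Rightarrow> real) \<Rightarrow> nat \<Rightarrow> real \<Rightarrow> nat \<Rightarrow> nat set" where
  "feasible_modes T sigma2 Pmax Tm S R N =
     {s. s \<le> S \<and> real N * R / R_max sigma2 Pmax \<le> N_plus T Tm N s}"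

text \<open>The objective whose minimiser over x > 0 defines R_a(s).\<close>
definition ra_obj :: "real \<Rightarrow> real \<Rightarrow> real \<Rightarrow> (nat \<Rightarrow> real) \<Rightarrow> nat \<Rightarrow> real \<Rightarrow> real" where
  "ra_obj sigma2 alpha gamma Pw s x =
     (Pw 0 - Pw s + gamma * sigma2 powr alpha * (2 powr x - 1) powr alpha) / x"

text \<open>N_{a,s} = round(min(N R / Rtilde_s, N^+_{a,s})), with N R / 0 read as +infinity.\<close>
definition N_a_s ::
  "real \<Rightarrow> real \<Rightarrow> real \<Rightarrow> (nat \<Rightarrow> real) \<Rightarrow> (nat \<Rightarrow> real) \<Rightarrow> real \<Rightarrow> nat \<Rightarrow> nat \<Rightarrow> nat" where
  "N_a_s T sigma2 Pmax Tm Ra R N s =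
     (let Rt = min (Ra s) (R_max sigma2 Pmax) in
      nat (round (if Rt = 0 then N_plus T Tm N s
                  else min (real N * R / Rt) (N_plus T Tm N s))))"

definition P_cons_s ::
  "real \<Rightarrow> real \<Rightarrow> real \<Rightarrow> real \<Rightarrow> real \<Rightarrow> (nat \<Rightarrow> real) \<Rightarrow> (nat \<Rightarrow> real) \<Rightarrow> nat
    \<Rightarrow> (nat \<Rightarrow> real) \<Rightarrow> real \<Rightarrow> nat \<Rightarrow> nat \<Rightarrow> real" where
  "P_cons_s T sigma2 Pmax alpha gamma Tm Pw S Ra R N s =
     (let Na = N_a_s T sigma2 Pmax Tm Ra R N s in
      real Na / real N *
        (Pw 0 + gamma * sigma2 powr alpha * (2 powr (R * real N / real Na) - 1) powr alpha)
      + E_sleep Tm Pw S ((real N - real Na) * T) / (real N * T))"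

end

theory Submission
  imports Defs
begin

text \<open>Write r_n = log2 (1 + p_n / sigma2) for the rates, so that sum_n r_n = N R and
  r_n \<le> Rmax. If the sleep period of an allocation ends in mode s, then
  N P_cons = sum_n q_s(r_n) + N P_s + L_s(0) / T, where
  q_s(x) = P_0 - P_s + gamma (sigma2 (2^x - 1))^alpha is the cost of a slot at rate x and L_s is
  the affine sleep energy of mode s; since E_sleep is the lower envelope of the L_s, the
  right-hand side bounds the cost from above for every mode s.
  A supporting line of q_s on [0, Rmax] gives sum_n q_s(r_n) \<ge> m q_s(N R / m) for the unrounded
  number m of active slots: the line through the origin of slope min_x q_s(x) / x, or, when
  m = N^+_{a,s} caps the number of slots, a tangent beyond R_a(s), where q_s is convex and the
  tangent cuts the axis below 0. Conversely P_cons_s is the cost of the equal allocation over the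
  rounded count; rounding changes m q_s(N R / m) by O(1), and if the rounded count would exceed
  P_max, one extra slot also costs O(1).\<close>

lemma DERIV_two_powr: "((\<lambda>x. 2 powr x) has_real_derivative ln 2 * 2 powr x) (at x)"
  using has_real_derivative_const_powr[of "\<lambda>x. x" "\<lambda>_. 1" 2] by simp

lemma two_powr_gt_linear:
  fixes x :: real assumes "x > 0" shows "x * ln 2 < 2 powr x - 1"
  using exp_minus_greater[of "- (x * ln 2)"] assms by (simp add: powr_def mult.commute)

lemma powr_eq_powr_minus_one_mult: "u > (0::real) \<Longrightarrow> u powr a = u powr (a - 1) * u"
  by (simp add: powr_diff)

definition rate_cost :: "real \<Rightarrow> real \<Rightarrow> real \<Rightarrow> real" where
  "rate_cost k a x = k * (2 powr x - 1) powr a"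

lemma rate_cost_nonneg: "k \<ge> 0 \<Longrightarrow> x \<ge> 0 \<Longrightarrow> rate_cost k a x \<ge> 0"
  unfolding rate_cost_def by simp

lemma rate_cost_mono:
  assumes "k \<ge> 0" "a \<ge> 0" "0 \<le> x" "x \<le> y" shows "rate_cost k a x \<le> rate_cost k a y"
proof -
  have "2 powr x - 1 \<ge> 0" using assms ge_one_powr_ge_zero by auto
  moreover have "2 powr x \<le> 2 powr y" using assms by simp
  ultimately show ?thesis unfolding rate_cost_def using assms by (simp add: mult_left_mono powr_mono2)
qed

locale slot_cost =
  fixes c g k a :: real
  assumes c: "c \<ge> 0" and g: "g > 0" and k: "k > 0" and a: "0 < a" "a \<le> 1"
begin

definition cost :: "real \<Rightarrow> real" where "cost x = c + g * rate_cost k a x"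
definition dcost :: "real \<Rightarrow> real" where
  "dcost x = g * k * a * ln 2 * 2 powr x * (2 powr x - 1) powr (a - 1)"
definition ddcost :: "real \<Rightarrow> real" where
  "ddcost x = g * k * a * (ln 2)^2 * 2 powr x * (2 powr x - 1) powr (a - 2) * (a * 2 powr x - 1)"
definition tangent_intercept :: "real \<Rightarrow> real" where
  "tangent_intercept x = cost x - dcost x * x"
definition avg_cost :: "real \<Rightarrow> real" where "avg_cost x = cost x / x"

definition convex_part :: "real \<Rightarrow> bool" where
  "convex_part x \<longleftrightarrow> x > 0 \<and> 1 \<le> a * 2 powr x"

lemma DERIV_cost: assumes "x > 0" shows "(cost has_real_derivative dcost x) (at x)"
proof -
  have u: "2 powr x - 1 > 0" using assms by simp
  have "((\<lambda>x. (2 powr x - 1) powr a) has_real_derivative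
          a * (2 powr x - 1) powr (a - 1) * (ln 2 * 2 powr x)) (at x)"
    using DERIV_fun_powr[OF DERIV_diff[OF DERIV_two_powr DERIV_const] u] by simp
  then show ?thesis
    using u unfolding cost_def[abs_def] rate_cost_def
    by (auto intro!: derivative_eq_intros simp: dcost_def algebra_simps)
qed

lemma DERIV_dcost: assumes "x > 0" shows "(dcost has_real_derivative ddcost x) (at x)"
proof -
  have u: "2 powr x - 1 > 0" using assms by simp
  have p: "((\<lambda>x. (2 powr x - 1) powr (a - 1)) has_real_derivative
          (a - 1) * (2 powr x - 1) powr (a - 2) * (ln 2 * 2 powr x)) (at x)"
    using DERIV_fun_powr[OF DERIV_diff[OF DERIV_two_powr DERIV_const] u, of "a - 1"]
    by (simp add: diff_diff_eq)
  have "(dcost has_real_derivative (g * k * a * ln 2) * ((ln 2 * 2 powr x) * (2 powr x - 1) powr (a - 1)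
          + 2 powr x * ((a - 1) * (2 powr x - 1) powr (a - 2) * (ln 2 * 2 powr x)))) (at x)"
    unfolding dcost_def[abs_def]
    by (rule derivative_eq_intros DERIV_cmult DERIV_two_powr p refl)+ (simp add: algebra_simps)
  moreover have "(2 powr x - 1) powr (a - 1) = (2 powr x - 1) powr (a - 2) * (2 powr x - 1)"
    using powr_eq_powr_minus_one_mult[OF u, of "a - 1"] by (simp add: diff_diff_eq)
  ultimately show ?thesis unfolding ddcost_def by (simp add: algebra_simps power2_eq_square)
qed

lemma DERIV_tangent_intercept:
  assumes "x > 0" shows "(tangent_intercept has_real_derivative - (x * ddcost x)) (at x)"
proof -
  have "(tangent_intercept has_real_derivative dcost x - (ddcost x * x + 1 * dcost x)) (at x)"
    unfolding tangent_intercept_def[abs_def]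
    by (intro DERIV_diff DERIV_mult DERIV_ident DERIV_cost[OF assms] DERIV_dcost[OF assms])
  then show ?thesis by (simp add: mult.commute)
qed

lemma DERIV_avg_cost:
  assumes "x > 0" shows "(avg_cost has_real_derivative - tangent_intercept x / x\<^sup>2) (at x)"
proof -
  have "(avg_cost has_real_derivative (dcost x * x - cost x * 1) / (x * x)) (at x)"
    unfolding avg_cost_def[abs_def] using DERIV_divide[OF DERIV_cost[OF assms] DERIV_ident] assms
    by simp
  then show ?thesis by (simp add: tangent_intercept_def power2_eq_square algebra_simps)
qed

lemma tangent_intercept_explicit: assumes "x > 0"
  shows "tangent_intercept x = c - g * k * (2 powr x - 1) powr (a - 1) * (a * x * ln 2 * 2 powr x - (2 powr x - 1))"
  unfolding tangent_intercept_def dcost_def cost_def rate_cost_def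
  by (subst powr_eq_powr_minus_one_mult[of "2 powr x - 1" a]) (use assms in \<open>simp_all add: algebra_simps\<close>)

lemma tangent_intercept_pos_outside_convex_part:
  assumes "x > 0" "\<not> convex_part x" shows "tangent_intercept x > 0"
proof -
  have "a * x * ln 2 * 2 powr x = x * ln 2 * (a * 2 powr x)" by simp
  also have "\<dots> \<le> x * ln 2" using assms by (simp add: convex_part_def mult_left_le)
  also have "\<dots> < 2 powr x - 1" by (rule two_powr_gt_linear[OF assms(1)])
  finally have "0 < g * k * (2 powr x - 1) powr (a - 1) * ((2 powr x - 1) - a * x * ln 2 * 2 powr x)"
    using g k assms(1) by simp
  then show ?thesis using tangent_intercept_explicit[OF assms(1)] c by (simp add: algebra_simps)
qed

lemma ddcost_nonneg: "convex_part x \<Longrightarrow> ddcost x \<ge> 0"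
  unfolding ddcost_def convex_part_def using g k a by simp

lemma convex_part_mono: "convex_part x \<Longrightarrow> x \<le> y \<Longrightarrow> convex_part y"
  unfolding convex_part_def using a by (smt (verit) mult_left_mono powr_mono)

lemma tangent_intercept_antimono:
  assumes "convex_part x" "x \<le> y" shows "tangent_intercept y \<le> tangent_intercept x"
proof (rule DERIV_nonpos_imp_nonincreasing[OF assms(2)])
  fix z assume "x \<le> z" "z \<le> y"
  then have "convex_part z" using convex_part_mono assms by blast
  then show "\<exists>d. (tangent_intercept has_real_derivative d) (at z) \<and> d \<le> 0"
    using DERIV_tangent_intercept ddcost_nonneg unfolding convex_part_def
    by (intro exI[of _ "- (z * ddcost z)"]) auto
qed

lemma dcost_mono: assumes "convex_part x" "x \<le> y" shows "dcost x \<le> dcost y"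
proof (rule DERIV_nonneg_imp_nondecreasing[OF assms(2)])
  fix z assume "x \<le> z" "z \<le> y"
  then have "convex_part z" using convex_part_mono assms by blast
  then show "\<exists>d. (dcost has_real_derivative d) (at z) \<and> d \<ge> 0"
    using DERIV_dcost ddcost_nonneg unfolding convex_part_def by (intro exI[of _ "ddcost z"]) auto
qed

lemma tangent_le_cost_convex_part:
  assumes "convex_part x0" "convex_part r" shows "cost x0 + dcost x0 * (r - x0) \<le> cost r"
proof (cases r x0 rule: linorder_cases)
  case less
  obtain z where z: "r < z" "z < x0" "cost x0 - cost r = (x0 - r) * dcost z"
    using MVT2[OF less, of cost dcost] DERIV_cost assms(2) unfolding convex_part_def by force
  have "dcost z \<le> dcost x0" using dcost_mono[of z x0] convex_part_mono[OF assms(2)] z by auto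
  then have "(x0 - r) * dcost z \<le> (x0 - r) * dcost x0" using less by (simp add: mult_left_mono)
  then show ?thesis using z by (simp add: algebra_simps)
next
  case greater
  obtain z where z: "x0 < z" "z < r" "cost r - cost x0 = (r - x0) * dcost z"
    using MVT2[OF greater, of cost dcost] DERIV_cost assms(1) unfolding convex_part_def by force
  have "dcost x0 \<le> dcost z" using dcost_mono[of x0 z] assms(1) z by auto
  then have "(r - x0) * dcost x0 \<le> (r - x0) * dcost z" using greater by (simp add: mult_left_mono)
  then show ?thesis using z by (simp add: algebra_simps)
qed simp

lemma cost_zero: "cost 0 = c" unfolding cost_def rate_cost_def by simp

lemma cost_nonneg: "x \<ge> 0 \<Longrightarrow> cost x \<ge> 0"
  unfolding cost_def using rate_cost_nonneg[of k x a] c g k by simp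

lemma cost_mono: "0 \<le> x \<Longrightarrow> x \<le> y \<Longrightarrow> cost x \<le> cost y"
  unfolding cost_def using rate_cost_mono[of k a x y] g k a by simp

lemma cost_eq_avg_cost: "x > 0 \<Longrightarrow> cost x = avg_cost x * x"
  unfolding avg_cost_def by simp

text \<open>Left of a dominating point i of the convex part, the tangent stays below the chord from
  the origin to (i, cost i), whose slope avg_cost i is at most the average cost there.\<close>
lemma tangent_le_cost:
  assumes "convex_part x0" "tangent_intercept x0 \<le> 0"
    and dominated: "\<And>r. r > 0 \<Longrightarrow> \<not> convex_part r \<Longrightarrow> \<exists>i. convex_part i \<and> r \<le> i \<and> avg_cost i \<le> avg_cost r"
    and "r \<ge> 0"
  shows "tangent_intercept x0 + dcost x0 * r \<le> cost r"
proof -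
  consider "r = 0" | "convex_part r" | "r > 0" "\<not> convex_part r"
    using \<open>r \<ge> 0\<close> by fastforce
  then show ?thesis
  proof cases
    case 1 then show ?thesis using assms(2) cost_zero c by simp
  next
    case 2 then show ?thesis
      using tangent_le_cost_convex_part[OF assms(1)] by (simp add: tangent_intercept_def algebra_simps)
  next
    case 3
    obtain i where i: "convex_part i" "r \<le> i" "avg_cost i \<le> avg_cost r" using dominated[OF 3] by blast
    have ip: "i > 0" using i convex_part_def by simp
    have ti: "tangent_intercept x0 + dcost x0 * i \<le> avg_cost i * i"
      using tangent_le_cost_convex_part[OF assms(1) i(1)] cost_eq_avg_cost[OF ip]
      by (simp add: tangent_intercept_def algebra_simps)
    have "tangent_intercept x0 + dcost x0 * r \<le> avg_cost i * r"
    proof (cases "dcost x0 \<le> avg_cost i")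
      case True
      then show ?thesis using assms(2) 3 by (smt (verit) mult_right_mono)
    next
      case False
      then have "(avg_cost i - dcost x0) * i \<le> (avg_cost i - dcost x0) * r"
        using i(2) by (simp add: mult_left_mono_neg)
      then show ?thesis using ti by (simp add: algebra_simps)
    qed
    also have "\<dots> \<le> avg_cost r * r" using i(3) 3 by (simp add: mult_right_mono)
    finally show ?thesis using cost_eq_avg_cost[OF 3(1)] by simp
  qed
qed

lemma line_through_origin_le_cost:
  assumes "r \<ge> 0" "r > 0 \<Longrightarrow> mu \<le> avg_cost r" shows "mu * r \<le> cost r"
proof (cases "r = 0")
  case True then show ?thesis using cost_zero c by simp
next
  case False
  then have "r > 0" using assms by simp
  then show ?thesis using assms(2) cost_eq_avg_cost by (simp add: mult_right_mono)
qed

lemma degenerate_tangent_le_cost: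
  assumes "a = 1" "c = 0" "x0 > 0" "r \<ge> 0"
  shows "tangent_intercept x0 \<le> 0" "tangent_intercept x0 + dcost x0 * r \<le> cost r"
proof -
  have conv: "convex_part x" if "x > 0" for x
    unfolding convex_part_def using assms(1) that ge_one_powr_ge_zero[of 2 x] by simp
  have "1 - x0 * ln 2 \<le> exp (- (x0 * ln 2))" using exp_minus_ge by blast
  then have "(1 - x0 * ln 2) * exp (x0 * ln 2) \<le> exp (- (x0 * ln 2)) * exp (x0 * ln 2)"
    by (simp add: mult_right_mono)
  then have "(1 - x0 * ln 2) * exp (x0 * ln 2) \<le> 1" by (simp add: exp_minus_inverse mult.commute)
  then have "2 powr x0 - 1 \<le> x0 * ln 2 * 2 powr x0" by (simp add: powr_def algebra_simps)
  then show "tangent_intercept x0 \<le> 0" using tangent_intercept_explicit[OF assms(3)] assms g k by simp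
  then show "tangent_intercept x0 + dcost x0 * r \<le> cost r"
    using tangent_le_cost[OF conv[OF assms(3)] _ _ assms(4)] conv by blast
qed

lemma dcost_le:
  assumes "x > 0" "x \<le> z" "z \<le> y"
  shows "dcost z \<le> g * k * a * ln 2 * 2 powr y * (2 powr x - 1) powr (a - 1)"
proof -
  have "(2 powr z - 1) powr (a - 1) \<le> (2 powr x - 1) powr (a - 1)"
    using assms a by (intro powr_mono2') auto
  moreover have "2 powr z \<le> 2 powr y" using assms by simp
  ultimately show ?thesis
    unfolding dcost_def using g k a by (simp add: mult_left_mono mult_mono)
qed

text \<open>Growing y is handled by monotonicity of cost, shrinking y by the bound on its slope on
  [x, 2 A].\<close>
lemma cost_rounding_bound:
  assumes K: "K > 0" and x: "x > 0"
    and y: "y1 > 0" "y2 > 0" "\<bar>y1 - y2\<bar> \<le> 1/2"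
    and bounds: "x \<le> K / y2" "K / y2 \<le> A" "K / y1 \<le> 2 * A"
  defines "D \<equiv> g * k * a * ln 2 * 2 powr (2 * A) * (2 powr x - 1) powr (a - 1)"
  shows "y1 * cost (K / y1) \<le> y2 * cost (K / y2) + (cost A / 2 + A * D)"
proof -
  have D: "D \<ge> 0" unfolding D_def using g k a by simp
  have A: "A > 0" using x bounds by linarith
  show ?thesis
  proof (cases "y2 \<le> y1")
    case True
    have "y1 * cost (K / y1) \<le> y1 * cost (K / y2)"
      using True K y by (intro mult_left_mono cost_mono) (auto simp: frac_le)
    also have "\<dots> = y2 * cost (K / y2) + (y1 - y2) * cost (K / y2)" by (simp add: algebra_simps)
    also have "(y1 - y2) * cost (K / y2) \<le> 1/2 * cost A"
      using y True bounds K cost_nonneg[of "K / y2"] cost_mono[of "K / y2" A] by (intro mult_mono) auto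
    finally have "y1 * cost (K / y1) \<le> y2 * cost (K / y2) + cost A / 2" by simp
    moreover have "0 \<le> A * D" using A D by simp
    ultimately show ?thesis by linarith
  next
    case False
    let ?x1 = "K / y1" and ?x2 = "K / y2"
    have lt: "?x2 < ?x1" using False K y by (simp add: frac_less2)
    obtain z where z: "?x2 < z" "z < ?x1" "cost ?x1 - cost ?x2 = (?x1 - ?x2) * dcost z"
      using MVT2[OF lt, of cost dcost] DERIV_cost x bounds by force
    have "dcost z \<le> D" unfolding D_def using dcost_le[of x z "2 * A"] x bounds z by simp
    have "y2 * (?x1 - ?x2) = K * (y2 - y1) / y1" using y by (simp add: field_simps)
    also have "\<dots> \<le> K * (1/2) / y1"
      using y K abs_le_D2[OF y(3)] by (intro divide_right_mono mult_left_mono) auto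
    finally have "y2 * (?x1 - ?x2) \<le> A" using bounds by simp
    have "y1 * cost ?x1 \<le> y2 * cost ?x1"
      using False cost_nonneg[of ?x1] K y by (simp add: mult_right_mono)
    also have "\<dots> = y2 * cost ?x2 + (y2 * (?x1 - ?x2)) * dcost z"
    proof -
      have "cost ?x1 = cost ?x2 + (?x1 - ?x2) * dcost z" using z(3) by linarith
      then show ?thesis by (simp only: distrib_left mult.assoc)
    qed
    also have "\<dots> \<le> y2 * cost ?x2 + (y2 * (?x1 - ?x2)) * D"
      using \<open>dcost z \<le> D\<close> lt y by (intro add_left_mono mult_left_mono) auto
    also have "\<dots> \<le> y2 * cost ?x2 + A * D"
      using \<open>y2 * (?x1 - ?x2) \<le> A\<close> D by (intro add_left_mono mult_right_mono)
    finally show ?thesis using cost_nonneg[of A] A by simp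
  qed
qed

end

locale slot_cost_min = slot_cost +
  fixes Ra :: real
  assumes Ra_pos: "Ra > 0" and Ra_min: "\<And>x. x > 0 \<Longrightarrow> avg_cost Ra \<le> avg_cost x"
begin

lemma tangent_intercept_Ra: "tangent_intercept Ra = 0"
proof -
  have "- tangent_intercept Ra / Ra\<^sup>2 = 0"
    by (rule DERIV_local_min[OF DERIV_avg_cost[OF Ra_pos] Ra_pos]) (auto intro!: Ra_min)
  then show ?thesis using Ra_pos by simp
qed

lemma convex_part_Ra: "convex_part Ra"
  using tangent_intercept_pos_outside_convex_part[OF Ra_pos] tangent_intercept_Ra by force

lemma tangent_intercept_nonpos: "Ra \<le> x \<Longrightarrow> tangent_intercept x \<le> 0"
  using tangent_intercept_antimono[OF convex_part_Ra] tangent_intercept_Ra by force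

lemma tangent_intercept_nonneg: assumes "0 < x" "x \<le> Ra" shows "tangent_intercept x \<ge> 0"
proof (cases "convex_part x")
  case True then show ?thesis using tangent_intercept_antimono[OF True assms(2)] tangent_intercept_Ra by simp
next
  case False then show ?thesis using tangent_intercept_pos_outside_convex_part[OF assms(1)] by simp
qed

lemma avg_cost_antimono: assumes "0 < x" "x \<le> y" "y \<le> Ra" shows "avg_cost y \<le> avg_cost x"
proof (rule DERIV_nonpos_imp_nonincreasing[OF assms(2)])
  fix z assume "x \<le> z" "z \<le> y"
  then have "z > 0" "tangent_intercept z \<ge> 0" using tangent_intercept_nonneg assms by auto
  then show "\<exists>d. (avg_cost has_real_derivative d) (at z) \<and> d \<le> 0" using DERIV_avg_cost by force
qed

lemma avg_cost_le: "0 < r \<Longrightarrow> x \<le> Ra \<Longrightarrow> r \<le> x \<or> x = Ra \<Longrightarrow> avg_cost x \<le> avg_cost r"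
  using avg_cost_antimono Ra_min by blast

lemma tangent_le_cost_beyond_Ra:
  assumes "Ra \<le> x0" "r \<ge> 0" shows "tangent_intercept x0 + dcost x0 * r \<le> cost r"
proof (rule tangent_le_cost[OF convex_part_mono[OF convex_part_Ra assms(1)]
      tangent_intercept_nonpos[OF assms(1)] _ assms(2)])
  fix r assume "r > 0" "\<not> convex_part r"
  then have "r \<le> Ra" using convex_part_mono[of Ra r] convex_part_Ra by force
  then show "\<exists>i. convex_part i \<and> r \<le> i \<and> avg_cost i \<le> avg_cost r"
    using convex_part_Ra Ra_min[OF \<open>r > 0\<close>] by blast
qed

end

definition sleep_line :: "(nat \<Rightarrow> real) \<Rightarrow> (nat \<Rightarrow> real) \<Rightarrow> nat \<Rightarrow> real \<Rightarrow> real" where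
  "sleep_line Tm Pw s t = (\<Sum>s'<s. Pw s' * (Tm (Suc s') - Tm s')) + (t - Tm s) * Pw s"

lemma sleep_line_Suc:
  "sleep_line Tm Pw (Suc s) t = sleep_line Tm Pw s t + (t - Tm (Suc s)) * (Pw (Suc s) - Pw s)"
  unfolding sleep_line_def by (simp add: algebra_simps)

lemma sleep_line_affine: "sleep_line Tm Pw s t = sleep_line Tm Pw s 0 + t * Pw s"
  unfolding sleep_line_def by (simp add: algebra_simps)

locale sleep_modes =
  fixes Tm Pw :: "nat \<Rightarrow> real" and S :: nat
  assumes Tm0: "Tm 0 = 0" and Tm1: "S \<ge> 1 \<Longrightarrow> Tm 0 \<le> Tm 1"
    and Tm_mono: "\<And>s. 1 \<le> s \<Longrightarrow> s < S \<Longrightarrow> Tm s < Tm (Suc s)"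
    and Pw_mono: "\<And>s. s < S \<Longrightarrow> Pw (Suc s) \<le> Pw s" and PwS: "Pw S \<ge> 0"
begin

lemma Tm_le: assumes "s \<le> s'" "s' \<le> S" shows "Tm s \<le> Tm s'"
  using assms
proof (induction rule: dec_induct)
  case (step n)
  then show ?case using Tm1 Tm_mono[of n] by (cases n) auto
qed simp

lemma Tm_nonneg: "s \<le> S \<Longrightarrow> Tm s \<ge> 0"
  using Tm_le[of 0 s] Tm0 by simp

lemma Pw_le: assumes "s \<le> s'" "s' \<le> S" shows "Pw s' \<le> Pw s"
  using assms
proof (induction rule: dec_induct)
  case (step n)
  then show ?case using Pw_mono[of n] by simp
qed simp

lemma Pw_nonneg: "s \<le> S \<Longrightarrow> Pw s \<ge> 0"
  using Pw_le[of s S] PwS by simp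

lemma sleep_mode_le: "t > 0 \<Longrightarrow> sleep_mode Tm S t \<le> S"
  and Tm_sleep_mode_less: "t > 0 \<Longrightarrow> Tm (sleep_mode Tm S t) < t"
  unfolding sleep_mode_def
  using GreatestI_nat[where P = "\<lambda>s. s \<le> S \<and> Tm s < t" and k = 0 and b = S] Tm0 by auto

lemma le_sleep_mode: "s \<le> S \<Longrightarrow> Tm s < t \<Longrightarrow> s \<le> sleep_mode Tm S t"
  unfolding sleep_mode_def by (rule Greatest_le_nat[of _ _ S]) auto

lemma E_sleep_eq_sleep_line: "t > 0 \<Longrightarrow> E_sleep Tm Pw S t = sleep_line Tm Pw (sleep_mode Tm S t) t"
  unfolding E_sleep_def sleep_line_def by (simp add: Let_def)

lemma sleep_line_le_later:
  assumes "m \<le> s" "s \<le> S" "\<And>j. m < j \<Longrightarrow> j \<le> s \<Longrightarrow> t \<le> Tm j"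
  shows "sleep_line Tm Pw m t \<le> sleep_line Tm Pw s t"
  using assms
proof (induction rule: dec_induct)
  case (step n)
  then have "(t - Tm (Suc n)) * (Pw (Suc n) - Pw n) \<ge> 0"
    using Pw_mono[of n] by (intro mult_nonpos_nonpos) auto
  then show ?case using step by (simp add: sleep_line_Suc)
qed simp

lemma sleep_line_le_earlier:
  assumes "m \<le> s" "s \<le> S" "\<And>j. m < j \<Longrightarrow> j \<le> s \<Longrightarrow> Tm j \<le> t"
  shows "sleep_line Tm Pw s t \<le> sleep_line Tm Pw m t"
  using assms
proof (induction rule: dec_induct)
  case (step n)
  then have "(t - Tm (Suc n)) * (Pw (Suc n) - Pw n) \<le> 0"
    using Pw_mono[of n] by (intro mult_nonneg_nonpos) auto
  then show ?case using step by (simp add: sleep_line_Suc)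
qed simp

text \<open>E_sleep is the lower envelope of the sleep lines: at time t the line of the current mode
  is below the lines of later modes (which start after t) and of earlier modes (whose powers
  are larger).\<close>
lemma E_sleep_le_sleep_line:
  assumes "s \<le> S" "t \<ge> 0" shows "E_sleep Tm Pw S t \<le> sleep_line Tm Pw s t"
proof (cases "t = 0")
  case True
  then have "sleep_line Tm Pw 0 t \<le> sleep_line Tm Pw s t"
    using assms Tm_nonneg by (intro sleep_line_le_later) auto
  then show ?thesis using True by (simp add: E_sleep_def sleep_line_def Tm0)
next
  case False
  then have t: "t > 0" using assms by simp
  define m where "m = sleep_mode Tm S t"
  have m: "m \<le> S" "Tm m < t" using sleep_mode_le[OF t] Tm_sleep_mode_less[OF t] m_def by auto
  have "sleep_line Tm Pw m t \<le> sleep_line Tm Pw s t"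
  proof (cases "m \<le> s")
    case True
    show ?thesis
    proof (rule sleep_line_le_later[OF True assms(1)])
      fix j assume "m < j" "j \<le> s"
      then show "t \<le> Tm j" using le_sleep_mode[of j t] assms(1) unfolding m_def by (meson leD le_trans not_le)
    qed
  next
    case False
    show ?thesis
    proof (rule sleep_line_le_earlier)
      fix j assume "s < j" "j \<le> m"
      then show "Tm j \<le> t" using Tm_le[of j m] m by simp
    qed (use False m in auto)
  qed
  then show ?thesis using E_sleep_eq_sleep_line[OF t] m_def by simp
qed

lemma E_sleep_nonneg: "E_sleep Tm Pw S t \<ge> 0"
proof (cases "t > 0")
  case True
  let ?m = "sleep_mode Tm S t"
  have "(\<Sum>s'<?m. Pw s' * (Tm (Suc s') - Tm s')) \<ge> 0"
  proof (intro sum_nonneg mult_nonneg_nonneg)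
    fix s' assume "s' \<in> {..<?m}"
    then have "Suc s' \<le> S" using sleep_mode_le[OF True] by simp
    then show "Pw s' \<ge> 0" "Tm (Suc s') - Tm s' \<ge> 0" using Pw_nonneg Tm_le[of s' "Suc s'"] by auto
  qed
  moreover have "(t - Tm ?m) * Pw ?m \<ge> 0"
    using Tm_sleep_mode_less[OF True] Pw_nonneg[OF sleep_mode_le[OF True]] by simp
  ultimately show ?thesis using E_sleep_eq_sleep_line[OF True] unfolding sleep_line_def by simp
qed (simp add: E_sleep_def)

lemma E_sleep_mono: assumes "t1 \<le> t2" shows "E_sleep Tm Pw S t1 \<le> E_sleep Tm Pw S t2"
proof (cases "t1 > 0")
  case True
  then have t2: "t2 > 0" using assms by simp
  let ?m = "sleep_mode Tm S t2"
  have "E_sleep Tm Pw S t1 \<le> sleep_line Tm Pw ?m t1"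
    using E_sleep_le_sleep_line[OF sleep_mode_le[OF t2]] True by simp
  also have "\<dots> \<le> sleep_line Tm Pw ?m t2"
    using sleep_line_affine[of Tm Pw ?m t1] sleep_line_affine[of Tm Pw ?m t2] assms Pw_nonneg[OF sleep_mode_le[OF t2]]
    by (simp add: mult_right_mono)
  finally show ?thesis using E_sleep_eq_sleep_line[OF t2] by simp
next
  case False
  then show ?thesis using E_sleep_nonneg[of t2] by (simp add: E_sleep_def)
qed

end

lemma sum_ge_supporting_line:
  fixes f :: "real \<Rightarrow> real" and r :: "nat \<Rightarrow> real"
  assumes line: "\<And>x. 0 \<le> x \<Longrightarrow> x \<le> B \<Longrightarrow> lam + mu * x \<le> f x"
    and r: "\<And>n. n < Na \<Longrightarrow> 0 \<le> r n \<and> r n \<le> B"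
    and m: "m > 0" "lam * m \<le> lam * real Na"
  shows "m * (lam + mu * ((\<Sum>n<Na. r n) / m)) \<le> (\<Sum>n<Na. f (r n))"
proof -
  have "m * (lam + mu * ((\<Sum>n<Na. r n) / m)) = lam * m + mu * (\<Sum>n<Na. r n)"
    using m by (simp add: field_simps)
  also have "\<dots> \<le> lam * real Na + mu * (\<Sum>n<Na. r n)" using m by simp
  also have "\<dots> = (\<Sum>n<Na. lam + mu * r n)" by (simp add: sum.distrib sum_distrib_left)
  also have "\<dots> \<le> (\<Sum>n<Na. f (r n))" using line r by (intro sum_mono) auto
  finally show ?thesis .
qed

locale sleep_allocation = sleep_modes +
  fixes T sigma2 Pmax alpha gamma R :: real and Ra :: "nat \<Rightarrow> real"
  assumes T_pos: "T > 0" and sigma2_pos: "sigma2 > 0" and Pmax_pos: "Pmax > 0"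
    and alpha: "0 < alpha" "alpha \<le> 1" and gamma_pos: "gamma > 0"
    and Ra_def: "\<And>s. s \<le> S \<Longrightarrow>
        (if Pw 0 = Pw s \<and> alpha = 1 then Ra s = 0
         else Ra s > 0 \<and> (\<forall>x>0. ra_obj sigma2 alpha gamma Pw s (Ra s) \<le> ra_obj sigma2 alpha gamma Pw s x))"
    and R: "0 < R" "R \<le> R_max sigma2 Pmax"
begin

definition Rmax :: real where "Rmax = R_max sigma2 Pmax"
definition sg :: real where "sg = sigma2 powr alpha"

text \<open>mode_cost s x is the power drawn by a slot carrying rate x, in excess of the sleep
  power of mode s: the transmit power is sigma2 * (2 powr x - 1).\<close>
abbreviation mode_cost :: "nat \<Rightarrow> real \<Rightarrow> real" where
  "mode_cost s \<equiv> slot_cost.cost (Pw 0 - Pw s) gamma sg alpha"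

definition Rtilde :: "nat \<Rightarrow> real" where "Rtilde s = min (Ra s) Rmax"

definition Na_frac :: "nat \<Rightarrow> nat \<Rightarrow> real" where
  "Na_frac N s = (if Rtilde s = 0 then N_plus T Tm N s
                  else min (real N * R / Rtilde s) (N_plus T Tm N s))"

definition rounding_const :: real where
  "rounding_const = (Pw 0 + gamma * rate_cost sg alpha Rmax) / 2
     + Rmax * (gamma * sg * alpha * ln 2 * 2 powr (2 * Rmax) * (2 powr R - 1) powr (alpha - 1))"

definition slot_const :: real where "slot_const = Pw 0 + gamma * rate_cost sg alpha (2 * Rmax)"

abbreviation "Pcons N Na p \<equiv> P_cons T alpha gamma Tm Pw S N Na p"
abbreviation "Pcons_s N s \<equiv> P_cons_s T sigma2 Pmax alpha gamma Tm Pw S Ra R N s"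
abbreviation "S_R N \<equiv> feasible_modes T sigma2 Pmax Tm S R N"
abbreviation "feasible N Na p \<equiv> feasible_alloc sigma2 Pmax R N Na p"

lemma Rmax_pos: "Rmax > 0"
proof -
  have "Pmax / sigma2 > 0" using sigma2_pos Pmax_pos by simp
  then show ?thesis unfolding Rmax_def R_max_def by simp
qed

lemma two_powr_Rmax: "2 powr Rmax = 1 + Pmax / sigma2"
proof -
  have "Pmax / sigma2 > 0" using sigma2_pos Pmax_pos by simp
  then show ?thesis unfolding Rmax_def R_max_def by simp
qed

lemma R_le_Rmax: "R \<le> Rmax" using R unfolding Rmax_def by simp

lemma sg_pos: "sg > 0" unfolding sg_def using sigma2_pos by simp

lemma slot_cost_mode: "s \<le> S \<Longrightarrow> slot_cost (Pw 0 - Pw s) gamma sg alpha"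
  unfolding slot_cost_def using Pw_le[of 0 s] gamma_pos sg_pos alpha by simp

lemma slot_cost_min_mode:
  assumes "s \<le> S" "\<not> (Pw 0 = Pw s \<and> alpha = 1)"
  shows "slot_cost_min (Pw 0 - Pw s) gamma sg alpha (Ra s)"
proof -
  interpret slot_cost "Pw 0 - Pw s" gamma sg alpha by (rule slot_cost_mode[OF assms(1)])
  have "avg_cost x = ra_obj sigma2 alpha gamma Pw s x" for x
    unfolding avg_cost_def cost_def rate_cost_def ra_obj_def by (simp add: sg_def algebra_simps)
  then show ?thesis
    using Ra_def[OF assms(1)] assms(2) slot_cost_mode[OF assms(1)]
    unfolding slot_cost_min_def slot_cost_min_axioms_def by simp
qed

lemma Rtilde_eq_0_iff: "s \<le> S \<Longrightarrow> Rtilde s = 0 \<longleftrightarrow> Pw 0 = Pw s \<and> alpha = 1"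
  using Ra_def[of s] Rmax_pos unfolding Rtilde_def by (auto split: if_splits)

lemma Rtilde_pos: "s \<le> S \<Longrightarrow> \<not> (Pw 0 = Pw s \<and> alpha = 1) \<Longrightarrow> Rtilde s > 0"
  using Ra_def[of s] Rmax_pos unfolding Rtilde_def by (auto split: if_splits)

lemma N_plus_le: "s \<le> S \<Longrightarrow> N_plus T Tm N s \<le> real N"
  unfolding N_plus_def using Tm_nonneg[of s] T_pos by simp

lemma Na_frac_bounds:
  assumes s: "s \<le> S" and N: "N > 0" and feas: "real N * R / Rmax \<le> N_plus T Tm N s"
  shows "real N * R / Rmax \<le> Na_frac N s" "Na_frac N s \<le> N_plus T Tm N s" "Na_frac N s > 0"
proof -
  have K: "real N * R > 0" using N R by simp
  show "real N * R / Rmax \<le> Na_frac N s"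
  proof (cases "Rtilde s = 0")
    case False
    then have "real N * R / Rmax \<le> real N * R / Rtilde s"
      using Rtilde_pos[OF s] Rtilde_eq_0_iff[OF s] K Rmax_pos unfolding Rtilde_def
      by (intro divide_left_mono) auto
    then show ?thesis using feas False unfolding Na_frac_def by simp
  qed (use feas in \<open>simp add: Na_frac_def\<close>)
  moreover have "real N * R / Rmax > 0" using K Rmax_pos by simp
  ultimately show "Na_frac N s > 0" by simp
  show "Na_frac N s \<le> N_plus T Tm N s" unfolding Na_frac_def by simp
qed

lemma Na_frac_eq_N_plus:
  assumes s: "s \<le> S" and Np: "N_plus T Tm N s > 0"
    and "Pw 0 = Pw s \<and> alpha = 1 \<or> Ra s \<le> real N * R / N_plus T Tm N s"
  shows "Na_frac N s = N_plus T Tm N s"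
proof (cases "Rtilde s = 0")
  case False
  then have "Rtilde s \<le> real N * R / N_plus T Tm N s" "Rtilde s > 0"
    using assms(3) Rtilde_eq_0_iff[OF s] Rtilde_pos[OF s] unfolding Rtilde_def by auto
  then have "N_plus T Tm N s \<le> real N * R / Rtilde s" using Np by (simp add: field_simps)
  then show ?thesis using False unfolding Na_frac_def by simp
qed (simp add: Na_frac_def)

lemma Na_frac_eq_div_Rtilde:
  assumes s: "s \<le> S" "\<not> (Pw 0 = Pw s \<and> alpha = 1)" and Np: "N_plus T Tm N s > 0"
    and "real N * R / N_plus T Tm N s \<le> Rtilde s"
  shows "Na_frac N s = real N * R / Rtilde s"
proof -
  have "Rtilde s > 0" using Rtilde_pos[OF s] .
  then have "real N * R / Rtilde s \<le> N_plus T Tm N s" using assms(4) Np by (simp add: field_simps)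
  then show ?thesis using \<open>Rtilde s > 0\<close> unfolding Na_frac_def by simp
qed

text \<open>Either the line is a tangent beyond R_a(s), meeting the axis below the origin, and then
  Na_frac N s = N_plus; or it passes through the origin with slope avg_cost (Rtilde s), the
  least average cost on rates up to Rmax.\<close>
lemma supporting_line_mode:
  assumes s: "s \<le> S" and N: "N > 0" and feas: "real N * R / Rmax \<le> N_plus T Tm N s"
  defines "x \<equiv> real N * R / Na_frac N s"
  shows "\<exists>lam mu. (\<forall>r. 0 \<le> r \<longrightarrow> r \<le> Rmax \<longrightarrow> lam + mu * r \<le> mode_cost s r)
     \<and> lam + mu * x = mode_cost s x \<and> (lam = 0 \<or> lam \<le> 0 \<and> Na_frac N s = N_plus T Tm N s)"
proof -
  interpret slot_cost "Pw 0 - Pw s" gamma sg alpha by (rule slot_cost_mode[OF s])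
  define K where "K = real N * R"
  have K: "K > 0" using N R unfolding K_def by simp
  have Np: "N_plus T Tm N s > 0"
    using feas K Rmax_pos unfolding K_def by (smt (verit) divide_pos_pos)
  define x0 where "x0 = K / N_plus T Tm N s"
  have x0: "x0 > 0" "x0 \<le> Rmax"
    using K Np feas Rmax_pos unfolding x0_def K_def by (auto simp: field_simps)
  show ?thesis
  proof (cases "Pw 0 = Pw s \<and> alpha = 1 \<or> Ra s \<le> x0")
    case True
    have "Na_frac N s = N_plus T Tm N s"
      using Na_frac_eq_N_plus[OF s Np] True unfolding x0_def K_def by simp
    then have x: "x = x0" unfolding x_def x0_def K_def by simp
    have "tangent_intercept x0 \<le> 0 \<and> (\<forall>r\<ge>0. tangent_intercept x0 + dcost x0 * r \<le> mode_cost s r)"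
    proof (cases "Pw 0 = Pw s \<and> alpha = 1")
      case True
      then show ?thesis
        using degenerate_tangent_le_cost(1)[OF _ _ x0(1), of 0] degenerate_tangent_le_cost(2)[OF _ _ x0(1)]
        by simp
    next
      case False
      interpret slot_cost_min "Pw 0 - Pw s" gamma sg alpha "Ra s" by (rule slot_cost_min_mode[OF s False])
      show ?thesis using \<open>Pw 0 = Pw s \<and> alpha = 1 \<or> Ra s \<le> x0\<close> False tangent_intercept_nonpos
          tangent_le_cost_beyond_Ra by auto
    qed
    then show ?thesis using \<open>Na_frac N s = N_plus T Tm N s\<close> x
      by (intro exI[of _ "tangent_intercept x0"] exI[of _ "dcost x0"]) (simp add: tangent_intercept_def)
  next
    case False
    then have nondeg: "\<not> (Pw 0 = Pw s \<and> alpha = 1)" and "x0 < Ra s" by auto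
    interpret slot_cost_min "Pw 0 - Pw s" gamma sg alpha "Ra s" by (rule slot_cost_min_mode[OF s nondeg])
    have Rt: "Rtilde s > 0" "x0 \<le> Rtilde s" "Rtilde s \<le> Ra s"
      using Rtilde_pos[OF s nondeg] x0 \<open>x0 < Ra s\<close> unfolding Rtilde_def by auto
    then have "Na_frac N s = K / Rtilde s"
      using Na_frac_eq_div_Rtilde[OF s nondeg Np] unfolding x0_def K_def by simp
    then have x: "x = Rtilde s" using N R Rt unfolding x_def K_def by simp
    have "avg_cost (Rtilde s) * r \<le> mode_cost s r" if "0 \<le> r" "r \<le> Rmax" for r
      using that Rt avg_cost_le[of r "Rtilde s"] unfolding Rtilde_def
      by (intro line_through_origin_le_cost) (auto simp: min_def split: if_splits)
    then show ?thesis using x cost_eq_avg_cost[OF Rt(1)]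
      by (intro exI[of _ 0] exI[of _ "avg_cost (Rtilde s)"]) (simp add: mult.commute)
  qed
qed

lemma feasible_modes_iff:
  "s \<in> S_R N \<longleftrightarrow> s \<le> S \<and> real N * R / Rmax \<le> N_plus T Tm N s"
  unfolding feasible_modes_def Rmax_def by simp

lemma finite_feasible_modes: "finite (S_R N)"
  unfolding feasible_modes_def by simp

lemma zero_in_feasible_modes: "0 \<in> S_R N"
proof -
  have "R * real N \<le> Rmax * real N" using mult_right_mono[OF R_le_Rmax] by simp
  then have "real N * R / Rmax \<le> real N" using Rmax_pos by (simp add: field_simps)
  then show ?thesis unfolding feasible_modes_iff N_plus_def using Tm0 by simp
qed

lemma P_cons_s_eq: "Pcons_s N s =
   (let Na = nat (round (Na_frac N s)) in
      real Na / real N * (Pw 0 + gamma * rate_cost sg alpha (R * real N / real Na))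
      + E_sleep Tm Pw S ((real N - real Na) * T) / (real N * T))"
  unfolding P_cons_s_def N_a_s_def Na_frac_def Rtilde_def Rmax_def rate_cost_def sg_def
  by (simp add: Let_def algebra_simps)

lemma round_Na_frac:
  assumes s: "s \<le> S" and N: "N > 0" and feas: "real N * R / Rmax \<le> N_plus T Tm N s"
    and NR: "Rmax \<le> real N * R"
  defines "y \<equiv> real (nat (round (Na_frac N s)))"
  shows "1 \<le> y" "\<bar>y - Na_frac N s\<bar> \<le> 1/2" "y \<le> real N" "real N * R / y \<le> 2 * Rmax"
proof -
  note bounds = Na_frac_bounds[OF s N feas]
  have one: "real N * R / Rmax \<ge> 1" using NR Rmax_pos by simp
  have lower: "of_int (round (Na_frac N s)) \<ge> Na_frac N s - 1/2" by (rule of_int_round_ge)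
  then have "round (Na_frac N s) \<ge> 1" using bounds one by linarith
  then have y: "y = of_int (round (Na_frac N s))" unfolding y_def by simp
  then show "1 \<le> y" using \<open>round (Na_frac N s) \<ge> 1\<close> by simp
  show "\<bar>y - Na_frac N s\<bar> \<le> 1/2" using y of_int_round_abs_le by simp
  have "y \<le> Na_frac N s + 1/2" using y of_int_round_le by simp
  then have "y < real N + 1" using bounds(2) N_plus_le[OF s, of N] by simp
  then have "nat (round (Na_frac N s)) \<le> N" unfolding y_def by linarith
  then show "y \<le> real N" unfolding y_def by simp
  have "y \<ge> real N * R / (2 * Rmax)" using lower y bounds(1) one by (simp add: field_simps)
  then show "real N * R / y \<le> 2 * Rmax" using \<open>1 \<le> y\<close> Rmax_pos N R by (simp add: field_simps)
qed

lemma equal_alloc: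
  assumes Na: "1 \<le> Na" "Na \<le> N" and x: "R * real N / real Na \<le> Rmax"
  defines "p \<equiv> \<lambda>n. if n < Na then sigma2 * (2 powr (R * real N / real Na) - 1) else 0"
  shows "feasible N Na p"
    "Pcons N Na p = real Na / real N * (Pw 0 + gamma * rate_cost sg alpha (R * real N / real Na))
        + E_sleep Tm Pw S ((real N - real Na) * T) / (real N * T)"
proof -
  define x where "x = R * real N / real Na"
  have x0: "x \<ge> 0" unfolding x_def using R by simp
  have u: "2 powr x - 1 \<ge> 0" using x0 ge_one_powr_ge_zero by simp
  have "2 powr x \<le> 2 powr Rmax" using assms(3) unfolding x_def by simp
  then have pmax: "sigma2 * (2 powr x - 1) \<le> Pmax" using two_powr_Rmax sigma2_pos by (simp add: field_simps)
  have "(\<Sum>n<Na. log 2 (1 + p n / sigma2)) = real Na * x"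
    unfolding p_def x_def[symmetric] using sigma2_pos by simp
  also have "\<dots> = R * real N" unfolding x_def using Na by simp
  finally show "feasible N Na p"
    unfolding feasible_alloc_def using Na pmax u sigma2_pos unfolding p_def x_def[symmetric] by auto
  have "(\<Sum>n<Na. p n powr alpha) = real Na * rate_cost sg alpha x"
    unfolding p_def x_def[symmetric] rate_cost_def sg_def using sigma2_pos u by (simp add: powr_mult)
  then show "Pcons N Na p = real Na / real N * (Pw 0 + gamma * rate_cost sg alpha (R * real N / real Na))
        + E_sleep Tm Pw S ((real N - real Na) * T) / (real N * T)"
    unfolding P_cons_def x_def[symmetric] using Na by (simp add: field_simps)
qed

lemma feasible_alloc_rates:
  assumes f: "feasible N Na p" and N: "N > 0" and n: "n < Na"
  defines "r \<equiv> log 2 (1 + p n / sigma2)"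
  shows "0 \<le> r" "r \<le> Rmax" "p n powr alpha = rate_cost sg alpha r"
proof -
  have p: "0 \<le> p n" "p n \<le> Pmax" using f n unfolding feasible_alloc_def by auto
  have ge1: "1 + p n / sigma2 \<ge> 1" using p sigma2_pos by simp
  have "1 + p n / sigma2 \<le> 1 + Pmax / sigma2" using p sigma2_pos by (simp add: divide_right_mono)
  then show "0 \<le> r" "r \<le> Rmax" unfolding r_def Rmax_def R_max_def using ge1 by auto
  have "2 powr r = 1 + p n / sigma2" unfolding r_def using ge1 by simp
  then have "p n = sigma2 * (2 powr r - 1)" using sigma2_pos by (simp add: field_simps)
  then show "p n powr alpha = rate_cost sg alpha r"
    unfolding rate_cost_def sg_def using sigma2_pos p ge_one_powr_ge_zero[of 2 r] by (simp add: powr_mult)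
qed

lemma feasible_alloc_rate_sum:
  "feasible N Na p \<Longrightarrow> N > 0 \<Longrightarrow> (\<Sum>n<Na. log 2 (1 + p n / sigma2)) = real N * R"
  unfolding feasible_alloc_def by (simp add: field_simps)

lemma feasible_alloc_Na_ge:
  assumes "feasible N Na p" "N > 0" shows "real N * R / Rmax \<le> real Na"
proof -
  have "(\<Sum>n<Na. log 2 (1 + p n / sigma2)) \<le> of_nat (card {..<Na}) * Rmax"
    using feasible_alloc_rates(2)[OF assms] by (intro sum_bounded_above) auto
  then show ?thesis using feasible_alloc_rate_sum[OF assms] Rmax_pos by (simp add: field_simps)
qed

text \<open>The mode reached during the sleep period starts before N - Na slots have passed, so it
  allows Na active slots.\<close>
lemma sleep_mode_of_alloc:
  assumes "Na \<le> N"
  obtains s where "s \<le> S" "real Na \<le> N_plus T Tm N s"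
    "E_sleep Tm Pw S ((real N - real Na) * T) = sleep_line Tm Pw s ((real N - real Na) * T)"
proof (cases "Na = N")
  case True
  then show ?thesis by (intro that[of 0]) (simp_all add: N_plus_def Tm0 E_sleep_def sleep_line_def)
next
  case False
  define t where "t = (real N - real Na) * T"
  have t: "t > 0" using False assms T_pos unfolding t_def by simp
  have "Tm (sleep_mode Tm S t) / T < real N - real Na"
    using Tm_sleep_mode_less[OF t] T_pos unfolding t_def by (simp add: field_simps)
  then have "real Na \<le> N_plus T Tm N (sleep_mode Tm S t)" unfolding N_plus_def by linarith
  then show ?thesis using that sleep_mode_le[OF t] E_sleep_eq_sleep_line[OF t] unfolding t_def by blast
qed

lemma Pcons_eq_mode_cost_sum:
  assumes f: "feasible N Na p" and N: "N > 0" and s: "s \<le> S"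
    and E: "E_sleep Tm Pw S ((real N - real Na) * T) = sleep_line Tm Pw s ((real N - real Na) * T)"
  shows "real N * Pcons N Na p
     = (\<Sum>n<Na. mode_cost s (log 2 (1 + p n / sigma2))) + real N * Pw s + sleep_line Tm Pw s 0 / T"
proof -
  interpret slot_cost "Pw 0 - Pw s" gamma sg alpha by (rule slot_cost_mode[OF s])
  have "(\<Sum>n<Na. cost (log 2 (1 + p n / sigma2))) = real Na * (Pw 0 - Pw s) + gamma * (\<Sum>n<Na. p n powr alpha)"
    using feasible_alloc_rates(3)[OF f N] by (simp add: cost_def sum.distrib sum_distrib_left)
  moreover have "real N * Pcons N Na p = real Na * Pw 0 + gamma * (\<Sum>n<Na. p n powr alpha)
      + E_sleep Tm Pw S ((real N - real Na) * T) / T"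
    unfolding P_cons_def using N T_pos by (simp add: field_simps)
  moreover have "E_sleep Tm Pw S ((real N - real Na) * T) / T = sleep_line Tm Pw s 0 / T + (real N - real Na) * Pw s"
    unfolding E sleep_line_affine[of Tm Pw s "(real N - real Na) * T"] using T_pos by (simp add: field_simps)
  ultimately show ?thesis by (simp add: algebra_simps)
qed

lemma Pcons_ge:
  assumes f: "feasible N Na p" and N: "N > 0" and s: "s \<le> S" and Na: "real Na \<le> N_plus T Tm N s"
    and E: "E_sleep Tm Pw S ((real N - real Na) * T) = sleep_line Tm Pw s ((real N - real Na) * T)"
  shows "Na_frac N s * mode_cost s (real N * R / Na_frac N s) + real N * Pw s + sleep_line Tm Pw s 0 / T
     \<le> real N * Pcons N Na p"
proof -
  interpret slot_cost "Pw 0 - Pw s" gamma sg alpha by (rule slot_cost_mode[OF s])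
  define r where "r n = log 2 (1 + p n / sigma2)" for n
  have feas: "real N * R / Rmax \<le> N_plus T Tm N s" using feasible_alloc_Na_ge[OF f N] Na by simp
  obtain lam mu where line: "\<forall>x. 0 \<le> x \<longrightarrow> x \<le> Rmax \<longrightarrow> lam + mu * x \<le> cost x"
    and eq: "lam + mu * (real N * R / Na_frac N s) = cost (real N * R / Na_frac N s)"
    and lam: "lam = 0 \<or> lam \<le> 0 \<and> Na_frac N s = N_plus T Tm N s"
    using supporting_line_mode[OF s N feas] by blast
  have "lam * Na_frac N s \<le> lam * real Na" using lam Na by (auto intro: mult_left_mono_neg)
  then have "Na_frac N s * (lam + mu * ((\<Sum>n<Na. r n) / Na_frac N s)) \<le> (\<Sum>n<Na. cost (r n))"
    using line feasible_alloc_rates(1,2)[OF f N] Na_frac_bounds(3)[OF s N feas]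
    by (intro sum_ge_supporting_line[where B = Rmax]) (auto simp: r_def)
  then have "Na_frac N s * cost (real N * R / Na_frac N s) \<le> (\<Sum>n<Na. cost (r n))"
    using eq feasible_alloc_rate_sum[OF f N] unfolding r_def by simp
  then show ?thesis using Pcons_eq_mode_cost_sum[OF f N s E] unfolding r_def by simp
qed

lemma Pcons_s_le:
  assumes s: "s \<le> S" and N: "N > 0" and feas: "real N * R / Rmax \<le> N_plus T Tm N s"
    and NR: "Rmax \<le> real N * R"
  shows "real N * Pcons_s N s \<le> Na_frac N s * mode_cost s (real N * R / Na_frac N s)
     + real N * Pw s + sleep_line Tm Pw s 0 / T + rounding_const"
proof -
  interpret slot_cost "Pw 0 - Pw s" gamma sg alpha by (rule slot_cost_mode[OF s])
  define y where "y = real (nat (round (Na_frac N s)))"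
  define t where "t = (real N - y) * T"
  note y = round_Na_frac[OF s N feas NR, folded y_def]
  note bounds = Na_frac_bounds[OF s N feas]
  have "t \<ge> 0" using y(3) T_pos unfolding t_def by simp
  then have "E_sleep Tm Pw S t \<le> sleep_line Tm Pw s 0 + t * Pw s"
    using E_sleep_le_sleep_line[OF s \<open>t \<ge> 0\<close>] sleep_line_affine[of Tm Pw s t] by linarith
  then have "E_sleep Tm Pw S t / T \<le> sleep_line Tm Pw s 0 / T + (real N - y) * Pw s"
    using T_pos unfolding t_def by (simp add: field_simps divide_right_mono)
  moreover have "real N * Pcons_s N s = y * cost (real N * R / y) + y * Pw s + E_sleep Tm Pw S t / T"
    unfolding P_cons_s_eq Let_def y_def[symmetric] t_def[symmetric] cost_def using N T_pos
    by (simp add: field_simps)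
  ultimately have "real N * Pcons_s N s \<le> y * cost (real N * R / y) + real N * Pw s + sleep_line Tm Pw s 0 / T"
    by (simp add: algebra_simps)
  also have "y * cost (real N * R / y) \<le> Na_frac N s * cost (real N * R / Na_frac N s) + rounding_const"
  proof -
    have K: "real N * R > 0" using N R by simp
    have "real N * R / Na_frac N s \<le> Rmax" using bounds(1,3) Rmax_pos K by (simp add: field_simps)
    moreover have "R \<le> real N * R / Na_frac N s"
      using bounds(2,3) N_plus_le[OF s, of N] R by (simp add: field_simps mult_right_mono)
    ultimately have "y * cost (real N * R / y) \<le> Na_frac N s * cost (real N * R / Na_frac N s)
        + (cost Rmax / 2 + Rmax * (gamma * sg * alpha * ln 2 * 2 powr (2 * Rmax) * (2 powr R - 1) powr (alpha - 1)))"
      using y bounds K R by (intro cost_rounding_bound) auto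
    moreover have "cost Rmax \<le> Pw 0 + gamma * rate_cost sg alpha Rmax"
      unfolding cost_def using Pw_nonneg[OF s] by simp
    ultimately show ?thesis unfolding rounding_const_def by argo
  qed
  finally show ?thesis by simp
qed

lemma Min_Pcons_s_le_Pcons:
  assumes N: "N > 0" and NR: "Rmax \<le> real N * R" and f: "feasible N Na p"
  shows "Min (Pcons_s N ` S_R N) \<le> Pcons N Na p + rounding_const / real N"
proof -
  have "Na \<le> N" using f unfolding feasible_alloc_def by simp
  then obtain s where s: "s \<le> S" "real Na \<le> N_plus T Tm N s"
    and E: "E_sleep Tm Pw S ((real N - real Na) * T) = sleep_line Tm Pw s ((real N - real Na) * T)"
    by (rule sleep_mode_of_alloc)
  have feas: "real N * R / Rmax \<le> N_plus T Tm N s" using feasible_alloc_Na_ge[OF f N] s by simp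
  have "real N * Pcons_s N s \<le> real N * Pcons N Na p + rounding_const"
    using Pcons_s_le[OF s(1) N feas NR] Pcons_ge[OF f N s E] by linarith
  then have "Pcons_s N s \<le> Pcons N Na p + rounding_const / real N" using N by (simp add: field_simps)
  moreover have "s \<in> S_R N" using s feas feasible_modes_iff by simp
  then have "Min (Pcons_s N ` S_R N) \<le> Pcons_s N s" using finite_feasible_modes by simp
  ultimately show ?thesis by simp
qed

text \<open>If the rounded count y of active slots would need more than Rmax per slot, one more
  slot makes the equal allocation feasible; this costs at most one slot at rate 2 Rmax, and
  the sleep energy only decreases.\<close>
lemma Pcons_extra_slot_le:
  assumes y: "1 \<le> y" "y < real N" "R * real N / y \<le> 2 * Rmax" "real N * R / Rmax \<le> y + 1"
    and Pcons_s: "Pcons_s N s = y / real N * (Pw 0 + gamma * rate_cost sg alpha (R * real N / y))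
      + E_sleep Tm Pw S ((real N - y) * T) / (real N * T)"
    and Na: "real Na = y + 1"
  defines "p \<equiv> \<lambda>n. if n < Na then sigma2 * (2 powr (R * real N / real Na) - 1) else 0"
  shows "feasible N Na p" "Pcons N Na p \<le> Pcons_s N s + slot_const / real N"
proof -
  have N: "N > 0" and Na_le: "1 \<le> Na" "Na \<le> N" using y Na by linarith+
  have x: "R * real N / real Na \<le> Rmax" using y Na Rmax_pos by (simp add: field_simps)
  show "feasible N Na p" unfolding p_def by (rule equal_alloc(1)[OF Na_le x])
  have rc: "rate_cost sg alpha (R * real N / real Na) \<le> rate_cost sg alpha (R * real N / y)"
    "rate_cost sg alpha (R * real N / y) \<le> rate_cost sg alpha (2 * Rmax)"
    using y Na R sg_pos alpha by (auto intro!: rate_cost_mono frac_le)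
  have E: "E_sleep Tm Pw S ((real N - real Na) * T) \<le> E_sleep Tm Pw S ((real N - y) * T)"
    using Na T_pos by (intro E_sleep_mono) simp
  have "real N * Pcons N Na p
      = real Na * (Pw 0 + gamma * rate_cost sg alpha (R * real N / real Na)) + E_sleep Tm Pw S ((real N - real Na) * T) / T"
    using equal_alloc(2)[OF Na_le x] N T_pos unfolding p_def by (simp add: field_simps)
  also have "\<dots> \<le> (y + 1) * (Pw 0 + gamma * rate_cost sg alpha (R * real N / y)) + E_sleep Tm Pw S ((real N - y) * T) / T"
    using rc E y gamma_pos T_pos unfolding Na by (intro add_mono mult_left_mono divide_right_mono) auto
  also have "\<dots> = real N * Pcons_s N s + (Pw 0 + gamma * rate_cost sg alpha (R * real N / y))"
    unfolding Pcons_s using N T_pos by (simp add: field_simps)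
  also have "\<dots> \<le> real N * Pcons_s N s + slot_const" unfolding slot_const_def using rc gamma_pos by simp
  finally show "Pcons N Na p \<le> Pcons_s N s + slot_const / real N" using N by (simp add: field_simps)
qed

lemma Pcons_le_Pcons_s:
  assumes N: "N > 0" and NR: "Rmax \<le> real N * R" and s: "s \<in> S_R N"
  shows "\<exists>Na p. feasible N Na p \<and> Pcons N Na p \<le> Pcons_s N s + slot_const / real N"
proof -
  have s': "s \<le> S" and feas: "real N * R / Rmax \<le> N_plus T Tm N s" using s feasible_modes_iff by auto
  define Na where "Na = nat (round (Na_frac N s))"
  define y where "y = real Na"
  note y = round_Na_frac[OF s' N feas NR, folded Na_def, folded y_def]
  note bounds = Na_frac_bounds[OF s' N feas]
  have slot_const: "slot_const \<ge> 0"
    unfolding slot_const_def using Pw_nonneg[of 0] rate_cost_nonneg[of sg "2 * Rmax"] Rmax_pos sg_pos gamma_pos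
    by simp
  have Pcons_s: "Pcons_s N s = y / real N * (Pw 0 + gamma * rate_cost sg alpha (R * real N / y))
      + E_sleep Tm Pw S ((real N - y) * T) / (real N * T)"
    unfolding P_cons_s_eq Let_def Na_def[symmetric] y_def ..
  show ?thesis
  proof (cases "R * real N / y \<le> Rmax")
    case True
    have "1 \<le> Na" "Na \<le> N" using y unfolding y_def by auto
    then show ?thesis using equal_alloc[OF _ _ True[unfolded y_def]] Pcons_s slot_const N
      unfolding y_def by (intro exI[of _ Na] exI) (auto simp: divide_nonneg_pos)
  next
    case False
    then have "y < real N * R / Rmax" using y Rmax_pos by (simp add: field_simps)
    then have "y < real N" using bounds(1,2) N_plus_le[OF s', of N] by simp
    moreover have "real N * R / Rmax \<le> y + 1" using y(2) bounds(1) unfolding abs_le_iff by linarith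
    ultimately show ?thesis
      using Pcons_extra_slot_le[OF y(1) _ _ _ Pcons_s, of "Na + 1"] y(4) unfolding y_def
      by (auto simp: mult.commute)
  qed
qed

lemma Pcons_nonneg: "feasible N Na p \<Longrightarrow> Pcons N Na p \<ge> 0"
  unfolding P_cons_def using Pw_nonneg[of 0] gamma_pos T_pos E_sleep_nonneg
  by (simp add: sum_nonneg)

lemma P_star_approx:
  "\<exists>C N0. \<forall>N\<ge>N0. \<bar>P_star T sigma2 Pmax alpha gamma Tm Pw S R N - Min (Pcons_s N ` S_R N)\<bar> \<le> C / real N"
proof (intro exI allI impI)
  fix N :: nat
  assume N0: "N \<ge> nat \<lceil>Rmax / R\<rceil> + 1"
  then have N: "N > 0" and "real N \<ge> Rmax / R" by linarith+
  then have NR: "Rmax \<le> real N * R" using R by (simp add: field_simps)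
  define P where "P = {Pcons N Na p | Na p. feasible N Na p}"
  define M where "M = Min (Pcons_s N ` S_R N)"
  have "R * real N / real N \<le> Rmax" using N R_le_Rmax by simp
  then have "P \<noteq> {}" using equal_alloc(1)[where Na = N and N = N] N unfolding P_def by auto
  moreover have "bdd_below P" unfolding P_def bdd_below_def using Pcons_nonneg by blast
  ultimately have lower: "M - rounding_const / real N \<le> Inf P"
    using Min_Pcons_s_le_Pcons[OF N NR] unfolding P_def M_def by (fastforce intro: cInf_greatest)
  have "M \<in> Pcons_s N ` S_R N"
    unfolding M_def using finite_feasible_modes zero_in_feasible_modes by (intro Min_in) auto
  then obtain s Na p where "M = Pcons_s N s" "feasible N Na p" "Pcons N Na p \<le> M + slot_const / real N"
    using Pcons_le_Pcons_s[OF N NR] by blast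
  then have upper: "Inf P \<le> M + slot_const / real N"
    using \<open>bdd_below P\<close> unfolding P_def by (fastforce intro: cInf_lower2)
  have "rounding_const / real N \<le> \<bar>rounding_const\<bar> / real N + \<bar>slot_const\<bar> / real N"
    "slot_const / real N \<le> \<bar>rounding_const\<bar> / real N + \<bar>slot_const\<bar> / real N"
    using N by (simp_all add: divide_right_mono add_increasing2 add_increasing)
  then show "\<bar>P_star T sigma2 Pmax alpha gamma Tm Pw S R N - M\<bar> \<le> (\<bar>rounding_const\<bar> + \<bar>slot_const\<bar>) / real N"
    using lower upper unfolding P_star_def P_def[symmetric] by (simp add: add_divide_distrib abs_le_iff)
qed

end

theorem theorem2:
  fixes T sigma2 Pmax alpha gamma R :: real
    and S :: nat and Tm Pw Ra :: "nat \<Rightarrow> real"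
  assumes T_pos: "T > 0" and sigma2_pos: "sigma2 > 0" and Pmax_pos: "Pmax > 0"
    and alpha: "0 < alpha" "alpha \<le> 1" and gamma_pos: "gamma > 0"
    and Tm0: "Tm 0 = 0" and Tm1: "S \<ge> 1 \<Longrightarrow> Tm 0 \<le> Tm 1"
    and Tm_mono: "\<And>s. 1 \<le> s \<Longrightarrow> s < S \<Longrightarrow> Tm s < Tm (Suc s)"
    and Pw_mono: "\<And>s. s < S \<Longrightarrow> Pw (Suc s) \<le> Pw s" and PwS: "Pw S \<ge> 0"
    and Ra_def: "\<And>s. s \<le> S \<Longrightarrow>
        (if Pw 0 = Pw s \<and> alpha = 1 then Ra s = 0
         else Ra s > 0 \<and> (\<forall>x>0. ra_obj sigma2 alpha gamma Pw s (Ra s) \<le> ra_obj sigma2 alpha gamma Pw s x))"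
    and R: "0 < R" "R \<le> R_max sigma2 Pmax"
  shows "\<exists>C N0. \<forall>N\<ge>N0.
           \<bar>P_star T sigma2 Pmax alpha gamma Tm Pw S R N
             - Min ((\<lambda>s. P_cons_s T sigma2 Pmax alpha gamma Tm Pw S Ra R N s)
                      ` feasible_modes T sigma2 Pmax Tm S R N)\<bar> \<le> C / real N"
proof -
  interpret sleep_allocation Tm Pw S T sigma2 Pmax alpha gamma R Ra
    by unfold_locales (use assms in auto)
  show ?thesis by (rule P_star_approx)
qed

end
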